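(* Let $k,m\in\mathbb{N}$ with $m<k\le 2m$, $k$ even, and $\gcd(2k+1,2(2m+1))=1$; let $a>0$ satisfy $\frac{1}{4km+3k+m+1}\le\frac{a}{2k+1}\le\frac{1}{4km+k+3m+1}$. For $s=0,\dots,4m+1$, $n=0,\dots,2k$ define $X_{sn}=\frac{s}{2(2m+1)}-\frac{n}{2k+1}$, $\Phi_{sn}=\sum_{l\in\mathbb{Z}}Q_2\big(2a(2m+1)(l+X_{sn})\big)$ with $Q_2(x)=(1-|x|)\chi_{[-1,1]}(x)$, and $A_{sn}=\Phi_{sn}-\Phi_{s,2k+1-n}$ for $n=1,\dots,k$. Then $A_{mn}=A_{m+1,n}$ for all $n=1,\dots,k$. *)

theory Defs
  imports "HOL-Analysis.Analysis"
begin

definition Q2 :: "real \<Rightarrow> real" where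
  "Q2 x = (if \<bar>x\<bar> \<le> 1 then 1 - \<bar>x\<bar> else 0)"

definition Xsn :: "nat \<Rightarrow> nat \<Rightarrow> nat \<Rightarrow> nat \<Rightarrow> real" where
  "Xsn k m s n = real s / (2 * (2 * real m + 1)) - real n / (2 * real k + 1)"

text \<open>Phi_{sn} = sum over all integers l of Q2(2a(2m+1)(l + X_{sn})); the summand is
  finitely supported, so the set-indexed sum infsum over the integers is the ordinary sum.\<close>
definition Phi :: "real \<Rightarrow> nat \<Rightarrow> nat \<Rightarrow> nat \<Rightarrow> nat \<Rightarrow> real" where
  "Phi a k m s n = (\<Sum>\<^sub>\<infinity>l::int. Q2 (2 * a * (2 * real m + 1) * (real_of_int l + Xsn k m s n)))"

definition Asn :: "real \<Rightarrow> nat \<Rightarrow> nat \<Rightarrow> nat \<Rightarrow> nat \<Rightarrow> real" where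
  "Asn a k m s n = Phi a k m s n - Phi a k m s (2 * k + 1 - n)"

end

theory Submission
  imports Defs
begin

text \<open>Put \<open>c = 2a(2m+1)\<close> and \<open>F(x) = \<Sum>\<^sub>l Q2(c(l+x))\<close>, a 1-periodic function
  with \<open>\<Phi>\<^sub>s\<^sub>n = F(X\<^sub>s\<^sub>n)\<close>. The bounds on \<open>a\<close> say that the tents have half-width
  \<open>1/c\<close> between \<open>1/2 - d\<close> and \<open>1/2 + d\<close>, where \<open>d = (k-m)/(2(2m+1)(2k+1))\<close>, and a
  divisibility argument shows that the points \<open>z = m/(2(2m+1)) \<plusminus> n/(2k+1)\<close> keep
  distance at least \<open>d\<close> from every half-integer. Hence at \<open>z\<close> and at \<open>1/2 - z\<close> exactly
  one tent is active, which gives \<open>F(z) + F(1/2 - z) = 2 - c/2\<close>. Since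
  \<open>X\<^bsub>m+1,n\<^esub> = 1/2 - X\<^bsub>m,2k+1-n\<^esub>\<close> modulo 1, the differences \<open>A\<^sub>m\<^sub>n\<close> and
  \<open>A\<^bsub>m+1,n\<^esub>\<close> agree.\<close>

definition periodic_tent :: "real \<Rightarrow> real \<Rightarrow> real" where
  "periodic_tent c x = (\<Sum>\<^sub>\<infinity>l::int. Q2 (c * (of_int l + x)))"

lemma Phi_eq_periodic_tent:
  "Phi a k m s n = periodic_tent (2 * a * (2 * real m + 1)) (Xsn k m s n)"
  by (simp add: Phi_def periodic_tent_def)

lemma periodic_tent_shift: "periodic_tent c (x + of_int j) = periodic_tent c x"
proof -
  have "bij_betw (\<lambda>l. l + j) UNIV UNIV"
    by (rule bij_betwI[where g = "\<lambda>l. l - j"]) auto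
  then have "(\<Sum>\<^sub>\<infinity>l::int. Q2 (c * (of_int (l + j) + x))) = periodic_tent c x"
    unfolding periodic_tent_def by (rule infsum_reindex_bij_betw)
  then show ?thesis
    by (simp add: periodic_tent_def add_ac)
qed

lemma periodic_tent_single_term:
  fixes c d x :: real and j :: int
  assumes "0 < c" "1 \<le> c * (1/2 + d)" "c * (1/2 - d) \<le> 1"
    and "\<bar>x - of_int j\<bar> \<le> 1/2 - d"
  shows "periodic_tent c x = 1 - c * \<bar>x - of_int j\<bar>"
proof -
  have "periodic_tent c x = (\<Sum>\<^sub>\<infinity>l\<in>{-j}. Q2 (c * (of_int l + x)))"
    unfolding periodic_tent_def
  proof (rule infsum_cong_neutral)
    fix l :: int
    assume "l \<in> UNIV - {-j}"
    then have "l + j \<noteq> 0"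
      by auto
    then have "1 \<le> \<bar>real_of_int (l + j)\<bar>"
      by linarith
    then have "1/2 + d \<le> \<bar>of_int l + x\<bar>"
      using assms(4) by linarith
    then have "1 \<le> c * \<bar>of_int l + x\<bar>"
      using assms(1,2) by (meson mult_left_mono less_imp_le order_trans)
    then show "Q2 (c * (of_int l + x)) = 0"
      using assms(1) by (auto simp: Q2_def abs_mult)
  qed auto
  also have "\<dots> = Q2 (c * (x - of_int j))"
    by simp
  also have "\<dots> = 1 - c * \<bar>x - of_int j\<bar>"
  proof -
    have "c * \<bar>x - of_int j\<bar> \<le> c * (1/2 - d)"
      using assms by (simp add: mult_left_mono)
    with assms(3) have "c * \<bar>x - of_int j\<bar> \<le> 1"
      by linarith
    with assms(1) show ?thesis
      by (simp add: Q2_def abs_mult)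
  qed
  finally show ?thesis .
qed

lemma periodic_tent_complement:
  fixes c d z :: real
  assumes c: "0 < c" "1 \<le> c * (1/2 + d)" "c * (1/2 - d) \<le> 1"
    and gap: "\<And>j::int. d \<le> \<bar>z - of_int j / 2\<bar>"
  shows "periodic_tent c z + periodic_tent c (1/2 - z) = 2 - c / 2"
proof -
  define j where "j = round z"
  define t where "t = z - of_int j"
  have "\<bar>t\<bar> \<le> 1/2"
    using of_int_round_abs_le[of z] by (simp add: t_def j_def abs_minus_commute)
  moreover have "d \<le> \<bar>t - 1/2\<bar>" "d \<le> \<bar>t + 1/2\<bar>" "d \<le> \<bar>t\<bar>"
    using gap[of "2 * j + 1"] gap[of "2 * j - 1"] gap[of "2 * j"]
    by (simp_all add: t_def field_simps)
  ultimately have t: "\<bar>t\<bar> \<le> 1/2 - d" "d \<le> \<bar>t\<bar>"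
    by linarith+
  obtain j' :: int where j': "\<bar>(1/2 - z) - of_int j'\<bar> = 1/2 - \<bar>t\<bar>"
  proof (cases "0 \<le> t")
    case True
    then show ?thesis
      using that[of "- j"] \<open>\<bar>t\<bar> \<le> 1/2\<close> by (simp add: t_def)
  next
    case False
    then show ?thesis
      using that[of "1 - j"] \<open>\<bar>t\<bar> \<le> 1/2\<close> by (simp add: t_def)
  qed
  have "periodic_tent c z = 1 - c * \<bar>t\<bar>"
    using periodic_tent_single_term[OF c, of z j] t by (simp add: t_def)
  moreover have "periodic_tent c (1/2 - z) = 1 - c * (1/2 - \<bar>t\<bar>)"
    using periodic_tent_single_term[OF c, of "1/2 - z" j'] t j' by simp
  ultimately show ?thesis
    by (simp add: algebra_simps)
qed

lemma abs_ge_if_dvd_add: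
  fixes r u M :: int
  assumes "M dvd r + u" "2 * u \<le> M"
  shows "u \<le> \<bar>r\<bar>"
proof (rule ccontr)
  assume "\<not> u \<le> \<bar>r\<bar>"
  then have "0 < r + u" "r + u < M"
    using assms(2) by linarith+
  with zdvd_imp_le[OF assms(1)] show False
    by simp
qed

lemma half_integer_gap:
  fixes k m :: nat and i j :: int
  assumes "k \<le> 2 * m"
  shows "(real k - real m) / (2 * (2 * real m + 1) * (2 * real k + 1))
    \<le> \<bar>real m / (2 * (2 * real m + 1)) + of_int i / (2 * real k + 1) - of_int j / 2\<bar>"
proof -
  define M K where "M = 2 * real m + 1" and "K = 2 * real k + 1"
  define r where
    "r = int m * (2 * int k + 1) + 2 * i * (2 * int m + 1) - j * (2 * int m + 1) * (2 * int k + 1)"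
  \<comment> \<open>numerator of the displacement; \<open>m(2k+1) + (k - m) = k(2m+1)\<close> gives \<open>r \<equiv> m - k\<close> mod \<open>2m+1\<close>\<close>
  have "r + (int k - int m) = (2 * int m + 1) * (int k + 2 * i - j * (2 * int k + 1))"
    by (simp add: r_def algebra_simps)
  then have "int k - int m \<le> \<bar>r\<bar>"
    by (intro abs_ge_if_dvd_add[of "2 * int m + 1"]) (use assms in simp_all)
  then have "real k - real m \<le> \<bar>of_int r\<bar>"
    by linarith
  moreover have "of_int r = real m * K + 2 * of_int i * M - of_int j * M * K"
    by (simp add: r_def M_def K_def)
  moreover have "0 < M" "0 < K"
    by (simp_all add: M_def K_def)
  ultimately have "real k - real m \<le> \<bar>real m * K + 2 * of_int i * M - of_int j * M * K\<bar>"
    and "real m / (2 * M) + of_int i / K - of_int j / 2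
      = (real m * K + 2 * of_int i * M - of_int j * M * K) / (2 * M * K)"
    by (simp_all add: field_simps)
  with \<open>0 < M\<close> \<open>0 < K\<close> show ?thesis
    unfolding M_def[symmetric] K_def[symmetric] by (simp add: divide_right_mono)
qed

(* The shifts are written as "+ of_int (-1)" so that periodic_tent_shift applies verbatim. *)
lemma Xsn_eq_offsets:
  fixes k m n :: nat
  assumes "n \<le> 2 * k + 1"
    and z: "\<And>i. z i = real m / (2 * (2 * real m + 1)) + of_int i / (2 * real k + 1)"
  shows "Xsn k m m n = z (- int n)"
    and "Xsn k m m (2 * k + 1 - n) = z (int n) + of_int (-1)"
    and "Xsn k m (m + 1) n = 1/2 - z (int n)"
    and "Xsn k m (m + 1) (2 * k + 1 - n) = (1/2 - z (- int n)) + of_int (-1)"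
proof -
  have mid: "real (m + 1) / (2 * (2 * real m + 1)) = 1/2 - real m / (2 * (2 * real m + 1))"
    by (simp add: field_simps)
  have refl: "real (2 * k + 1 - n) / (2 * real k + 1) = 1 - real n / (2 * real k + 1)"
    using assms(1) by (simp add: of_nat_diff field_simps)
  show "Xsn k m m n = z (- int n)"
    "Xsn k m m (2 * k + 1 - n) = z (int n) + of_int (-1)"
    "Xsn k m (m + 1) n = 1/2 - z (int n)"
    "Xsn k m (m + 1) (2 * k + 1 - n) = (1/2 - z (- int n)) + of_int (-1)"
    unfolding Xsn_def z mid refl by simp_all
qed

lemma tent_width_bounds:
  fixes k m :: nat and a :: real
  defines "c \<equiv> 2 * a * (2 * real m + 1)"
    and "d \<equiv> (real k - real m) / (2 * (2 * real m + 1) * (2 * real k + 1))"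
  assumes "1 / real (4 * k * m + 3 * k + m + 1) \<le> a / real (2 * k + 1)"
    and "a / real (2 * k + 1) \<le> 1 / real (4 * k * m + k + 3 * m + 1)"
  shows "1 \<le> c * (1/2 + d)" and "c * (1/2 - d) \<le> 1"
proof -
  define M K where "M = 2 * real m + 1" and "K = 2 * real k + 1"
  have casts: "real (4 * k * m + 3 * k + m + 1) = K * M + (real k - real m)"
    "real (4 * k * m + k + 3 * m + 1) = K * M - (real k - real m)"
    "real (2 * k + 1) = K"
    by (simp_all add: M_def K_def algebra_simps)
  have wide: "1 / (K * M + (real k - real m)) \<le> a / K"
    and narrow: "a / K \<le> 1 / (K * M - (real k - real m))"
    using assms(3,4) by (simp_all only: casts)
  have pos: "0 < M" "0 < K" "0 < K * M + (real k - real m)" "0 < K * M - (real k - real m)"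
    by (simp_all add: M_def K_def algebra_simps add_pos_nonneg)
  have "c * (1/2 + d) = a * (K * M + (real k - real m)) / K"
    and "c * (1/2 - d) = a * (K * M - (real k - real m)) / K"
    using pos by (simp_all add: c_def d_def M_def K_def field_simps)
  moreover have "K \<le> a * (K * M + (real k - real m))" "a * (K * M - (real k - real m)) \<le> K"
    using wide narrow pos by (simp_all add: field_simps)
  ultimately show "1 \<le> c * (1/2 + d)" "c * (1/2 - d) \<le> 1"
    using pos by (simp_all add: le_divide_eq divide_le_eq)
qed

theorem lemma3p13:
  fixes k m :: nat and a :: real
  assumes "m < k" and "k \<le> 2 * m" and "even k"
    and "gcd (2 * k + 1) (2 * (2 * m + 1)) = 1"
    and "a > 0"
    and "1 / real (4 * k * m + 3 * k + m + 1) \<le> a / real (2 * k + 1)"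
    and "a / real (2 * k + 1) \<le> 1 / real (4 * k * m + k + 3 * m + 1)"
  shows "\<forall>n \<in> {1..k}. Asn a k m m n = Asn a k m (m + 1) n"
proof
  fix n
  assume "n \<in> {1..k}"
  define c where "c = 2 * a * (2 * real m + 1)"
  define d where "d = (real k - real m) / (2 * (2 * real m + 1) * (2 * real k + 1))"
  define z where "z i = real m / (2 * (2 * real m + 1)) + of_int i / (2 * real k + 1)" for i :: int
  have complement: "periodic_tent c (z i) + periodic_tent c (1/2 - z i) = 2 - c / 2" for i
  proof (rule periodic_tent_complement)
    show "0 < c"
      using \<open>a > 0\<close> by (simp add: c_def)
    show "1 \<le> c * (1/2 + d)" "c * (1/2 - d) \<le> 1"
      using tent_width_bounds[OF assms(6,7)] unfolding c_def d_def .
    show "\<And>j. d \<le> \<bar>z i - of_int j / 2\<bar>"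
      unfolding d_def z_def by (rule half_integer_gap[OF assms(2)])
  qed
  from \<open>n \<in> {1..k}\<close> have "n \<le> 2 * k + 1"
    by simp
  note offsets = Xsn_eq_offsets[OF this z_def]
  show "Asn a k m m n = Asn a k m (m + 1) n"
    using complement[of "int n"] complement[of "- int n"]
    unfolding Asn_def Phi_eq_periodic_tent c_def[symmetric] offsets periodic_tent_shift
    by linarith
qed

end
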